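(* Let $A, C, D$ be binary random variables, with $A$ taking values $a,\overline{a}$, $C$ taking values $c,\overline{c}$, $D$ taking values $d,\overline{d}$, and let $Y$ be a real random variable with finite expectation. Suppose the joint distribution factorizes as \[ p(A,C,D,Y)=p(C)\,p(D\mid C)\,p(A\mid C)\,p(Y\mid A,C), \] and that every event $\{A=x, C=y, D=z\}$ has positive probability. Let $p(c)=0.5$, $p(d\mid c)=p(\overline{d}\mid\overline{c})\ge 0.5$ and $p(\overline{a}\mid\overline{c})\ge p(a\mid c)\ge 0.5$. If \[ E[Y|a,c]-E[Y|a,\overline{c}]\ \le\ E[Y|\overline{a},\overline{c}]-E[Y|\overline{a},c]\ \le\ 0, \] then $RD_{crude}\le RD_{true}$ and $RD_{obs}\le RD_{true}$.
   Context: $RD_{true}=E[Y|a,c]p(c)+E[Y|a,\overline{c}]p(\overline{c})-E[Y|\overline{a},c]p(c)-E[Y|\overline{a},\overline{c}]p(\overline{c})$; $RD_{crude}=E[Y|a]-E[Y|\overline{a}]$; $RD_{obs}=E[Y|a,d]p(d)+E[Y|a,\overline{d}]p(\overline{d})-E[Y|\overline{a},d]p(d)-E[Y|\overline{a},\overline{d}]p(\overline{d})$. *)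

theory Defs
  imports "HOL-Probability.Probability"
begin

text \<open>Binary random variables are modelled as Boolean-valued functions on the sample
space: A = True means the value a, A = False means the value a-bar (likewise C, D).\<close>

definition ev :: "'s measure \<Rightarrow> ('s \<Rightarrow> bool) \<Rightarrow> 's set" where
  "ev M P = {\<omega> \<in> space M. P \<omega>}"

definition pr :: "'s measure \<Rightarrow> ('s \<Rightarrow> bool) \<Rightarrow> real" where
  "pr M P = measure M (ev M P)"

definition cpr :: "'s measure \<Rightarrow> ('s \<Rightarrow> bool) \<Rightarrow> ('s \<Rightarrow> bool) \<Rightarrow> real" where
  "cpr M P Q = pr M (\<lambda>\<omega>. P \<omega> \<and> Q \<omega>) / pr M Q"

definition cexp :: "'s measure \<Rightarrow> ('s \<Rightarrow> real) \<Rightarrow> ('s \<Rightarrow> bool) \<Rightarrow> real" where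
  "cexp M Y P = (LINT \<omega>:ev M P|M. Y \<omega>) / pr M P"

definition RD_true :: "'s measure \<Rightarrow> ('s \<Rightarrow> bool) \<Rightarrow> ('s \<Rightarrow> bool) \<Rightarrow> ('s \<Rightarrow> real) \<Rightarrow> real" where
  "RD_true M A C Y =
     cexp M Y (\<lambda>\<omega>. A \<omega> \<and> C \<omega>) * pr M C
   + cexp M Y (\<lambda>\<omega>. A \<omega> \<and> \<not> C \<omega>) * pr M (\<lambda>\<omega>. \<not> C \<omega>)
   - cexp M Y (\<lambda>\<omega>. \<not> A \<omega> \<and> C \<omega>) * pr M C
   - cexp M Y (\<lambda>\<omega>. \<not> A \<omega> \<and> \<not> C \<omega>) * pr M (\<lambda>\<omega>. \<not> C \<omega>)"

definition RD_crude :: "'s measure \<Rightarrow> ('s \<Rightarrow> bool) \<Rightarrow> ('s \<Rightarrow> real) \<Rightarrow> real" where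
  "RD_crude M A Y = cexp M Y A - cexp M Y (\<lambda>\<omega>. \<not> A \<omega>)"

definition RD_obs :: "'s measure \<Rightarrow> ('s \<Rightarrow> bool) \<Rightarrow> ('s \<Rightarrow> bool) \<Rightarrow> ('s \<Rightarrow> real) \<Rightarrow> real" where
  "RD_obs M A D Y = RD_true M A D Y"

end

(* The factorisation makes D independent of (A, Y) given C, so E[Y | A, C, D] = E[Y | A, C].
   Hence every conditional mean occurring in RD_crude and RD_obs is a weighted mean of the four
   stratum means E[Y | A, C]; with p(c) = 1/2 the weights are explicit in a = p(a | c),
   b = p(not a | not c) and d = p(d | c). RD_true minus RD_crude is then (a + b - 1)/2 times a
   difference of two ratios whose sign is fixed by E[Y|a,c] - E[Y|a,not c] <= E[Y|not a,not c]
   - E[Y|not a,c] <= 0 and a <= b. RD_true minus RD_obs is a combination of the same two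
   contrasts whose coefficients are controlled by a + b >= 1 and a (1 - a) >= b (1 - b). *)

theory Submission
  imports Defs
begin

lemma ev_sets_conj:
  assumes "ev M P \<in> sets M" "ev M Q \<in> sets M"
  shows "ev M (\<lambda>\<omega>. P \<omega> \<and> Q \<omega>) \<in> sets M"
proof -
  have "ev M (\<lambda>\<omega>. P \<omega> \<and> Q \<omega>) = ev M P \<inter> ev M Q" by (auto simp: ev_def)
  with assms show ?thesis by auto
qed

lemma ev_sets_not:
  assumes "ev M P \<in> sets M"
  shows "ev M (\<lambda>\<omega>. \<not> P \<omega>) \<in> sets M"
proof -
  have "ev M (\<lambda>\<omega>. \<not> P \<omega>) = space M - ev M P" by (auto simp: ev_def)
  with assms show ?thesis by auto
qed

lemma ev_sets_eq_bool:
  "ev M P \<in> sets M \<Longrightarrow> ev M (\<lambda>\<omega>. P \<omega> = x) \<in> sets M"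
  by (cases x) (simp_all add: ev_sets_not)

lemma (in prob_space) pr_not:
  assumes "ev M P \<in> sets M"
  shows "pr M (\<lambda>\<omega>. \<not> P \<omega>) = 1 - pr M P"
proof -
  have "ev M (\<lambda>\<omega>. \<not> P \<omega>) = space M - ev M P" by (auto simp: ev_def)
  with assms show ?thesis by (simp add: pr_def prob_compl)
qed

lemma (in finite_measure) pr_split:
  assumes "ev M P \<in> sets M" "ev M Q \<in> sets M"
  shows "pr M P = pr M (\<lambda>\<omega>. P \<omega> \<and> Q \<omega>) + pr M (\<lambda>\<omega>. P \<omega> \<and> \<not> Q \<omega>)"
proof -
  have "ev M P = ev M (\<lambda>\<omega>. P \<omega> \<and> Q \<omega>) \<union> ev M (\<lambda>\<omega>. P \<omega> \<and> \<not> Q \<omega>)"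
    by (auto simp: ev_def)
  moreover have "ev M (\<lambda>\<omega>. P \<omega> \<and> Q \<omega>) \<inter> ev M (\<lambda>\<omega>. P \<omega> \<and> \<not> Q \<omega>) = {}"
    by (auto simp: ev_def)
  ultimately show ?thesis
    unfolding pr_def using assms by (simp add: finite_measure_Union ev_sets_conj ev_sets_not)
qed

lemma pr_conj_eq_cpr:
  "pr M Q \<noteq> 0 \<Longrightarrow> pr M (\<lambda>\<omega>. P \<omega> \<and> Q \<omega>) = pr M Q * cpr M P Q"
  by (simp add: cpr_def)

lemma (in finite_measure) cpr_not:
  assumes "ev M P \<in> sets M" "ev M Q \<in> sets M" "pr M Q \<noteq> 0"
  shows "cpr M (\<lambda>\<omega>. \<not> P \<omega>) Q = 1 - cpr M P Q"
  using pr_split[OF assms(2,1)] assms(3) by (simp add: cpr_def conj_commute field_simps)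

lemma (in finite_measure) cpr_strict_bounds:
  assumes "ev M P \<in> sets M" "ev M Q \<in> sets M"
    and pos: "0 < pr M (\<lambda>\<omega>. P \<omega> \<and> Q \<omega>)" "0 < pr M (\<lambda>\<omega>. \<not> P \<omega> \<and> Q \<omega>)"
  shows "0 < cpr M P Q" "cpr M P Q < 1"
proof -
  have "pr M Q = pr M (\<lambda>\<omega>. P \<omega> \<and> Q \<omega>) + pr M (\<lambda>\<omega>. \<not> P \<omega> \<and> Q \<omega>)"
    using pr_split[OF assms(2,1)] by (simp add: conj_commute)
  with pos show "0 < cpr M P Q" "cpr M P Q < 1"
    by (simp_all add: cpr_def)
qed

lemma (in finite_measure) pr_mono:
  assumes "ev M Q \<in> sets M" "\<And>\<omega>. P \<omega> \<Longrightarrow> Q \<omega>"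
  shows "pr M P \<le> pr M Q"
  unfolding pr_def using assms by (intro finite_measure_mono) (auto simp: ev_def)

definition wmean :: "real \<Rightarrow> real \<Rightarrow> real \<Rightarrow> real \<Rightarrow> real" where
  "wmean w1 y1 w2 y2 = (w1 * y1 + w2 * y2) / (w1 + w2)"

lemma wmean_eq_shift:
  "w1 + w2 \<noteq> 0 \<Longrightarrow> wmean w1 y1 w2 y2 = y2 + w1 / (w1 + w2) * (y1 - y2)"
  by (simp add: wmean_def field_simps)

lemma wmean_divide:
  assumes "c \<noteq> 0"
  shows "wmean (w1 / c) y1 (w2 / c) y2 = wmean w1 y1 w2 y2"
proof -
  have "w1 / c * y1 + w2 / c * y2 = (w1 * y1 + w2 * y2) / c" "w1 / c + w2 / c = (w1 + w2) / c"
    by (simp_all add: add_divide_distrib)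
  with assms show ?thesis
    by (simp add: wmean_def)
qed

lemma (in finite_measure) cexp_disjoint_Un:
  fixes Y :: "'a \<Rightarrow> real"
  assumes Y: "integrable M Y"
    and Q: "ev M Q1 \<in> sets M" "ev M Q2 \<in> sets M"
    and P: "ev M P = ev M Q1 \<union> ev M Q2" and disj: "ev M Q1 \<inter> ev M Q2 = {}"
    and pos: "pr M Q1 \<noteq> 0" "pr M Q2 \<noteq> 0"
  shows "cexp M Y P = wmean (pr M Q1) (cexp M Y Q1) (pr M Q2) (cexp M Y Q2)"
proof -
  have "set_integrable M (ev M Q) Y" if "ev M Q \<in> sets M" for Q
    unfolding set_integrable_def using integrable_mult_indicator[OF that Y] .
  then have "(LINT \<omega>:ev M P|M. Y \<omega>) = (LINT \<omega>:ev M Q1|M. Y \<omega>) + (LINT \<omega>:ev M Q2|M. Y \<omega>)"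
    unfolding P using disj Q by (intro set_integral_Un) auto
  moreover have "pr M P = pr M Q1 + pr M Q2"
    unfolding pr_def P using disj Q by (intro finite_measure_Union) auto
  ultimately show ?thesis
    using pos by (simp add: cexp_def wmean_def)
qed

lemma (in finite_measure) emeasure_distr_density_indicator:
  fixes Y :: "'a \<Rightarrow> real"
  assumes E: "E \<in> sets M" and Y: "Y \<in> borel_measurable M"
    and k: "k \<ge> 0" and B: "B \<in> sets borel"
  shows "emeasure (distr (density M (\<lambda>\<omega>. ennreal (k * indicator E \<omega>))) borel Y) B
         = ennreal (k * measure M (E \<inter> Y -` B))"
proof -
  have YB: "Y -` B \<inter> space M \<in> sets M" using Y B by (rule measurable_sets)
  have "E \<inter> Y -` B = E \<inter> (Y -` B \<inter> space M)"
    using sets.sets_into_space[OF E] by auto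
  with E YB have EB: "E \<inter> Y -` B \<in> sets M" by auto
  have "emeasure (distr (density M (\<lambda>\<omega>. ennreal (k * indicator E \<omega>))) borel Y) B
      = (\<integral>\<^sup>+ \<omega>. ennreal (k * indicator E \<omega>) * indicator (Y -` B \<inter> space M) \<omega> \<partial>M)"
    using Y B YB E by (simp add: emeasure_distr emeasure_density)
  also have "\<dots> = (\<integral>\<^sup>+ \<omega>. ennreal k * indicator (E \<inter> Y -` B) \<omega> \<partial>M)"
    by (rule nn_integral_cong) (auto simp: indicator_def)
  also have "\<dots> = ennreal (k * measure M (E \<inter> Y -` B))"
    using EB k by (simp add: nn_integral_cmult_indicator emeasure_eq_measure ennreal_mult)
  finally show ?thesis .
qed

lemma integral_distr_density_indicator:
  fixes Y :: "'a \<Rightarrow> real"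
  assumes E: "E \<in> sets M" and Y: "Y \<in> borel_measurable M" and k: "k \<ge> 0"
  shows "integral\<^sup>L (distr (density M (\<lambda>\<omega>. ennreal (k * indicator E \<omega>))) borel Y) (\<lambda>t. t)
         = k * (LINT \<omega>:E|M. Y \<omega>)"
proof -
  have "(\<lambda>\<omega>. k * indicator E \<omega>) \<in> borel_measurable M" using E by measurable
  then have "integral\<^sup>L (density M (\<lambda>\<omega>. ennreal (k * indicator E \<omega>))) Y
      = (LINT \<omega>|M. (k * indicator E \<omega>) *\<^sub>R Y \<omega>)"
    using Y k by (intro integral_density) auto
  then show ?thesis
    using Y by (simp add: integral_distr set_lebesgue_integral_def mult.assoc)
qed

lemma (in finite_measure) set_integral_eq_of_scaled_distr:
  fixes Y :: "'a \<Rightarrow> real"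
  assumes E: "E1 \<in> sets M" "E2 \<in> sets M"
    and Y: "Y \<in> borel_measurable M" and k: "k1 \<ge> 0" "k2 \<ge> 0"
    and scaled: "\<And>B. B \<in> sets borel \<Longrightarrow> measure M (E1 \<inter> Y -` B) * k1 = k2 * measure M (E2 \<inter> Y -` B)"
  shows "(LINT \<omega>:E1|M. Y \<omega>) * k1 = k2 * (LINT \<omega>:E2|M. Y \<omega>)"
proof -
  \<comment> \<open>Both sides are the mean of the same measure on the reals, the image under Y of a weighted restriction of M.\<close>
  have "distr (density M (\<lambda>\<omega>. ennreal (k1 * indicator E1 \<omega>))) borel Y
      = distr (density M (\<lambda>\<omega>. ennreal (k2 * indicator E2 \<omega>))) borel Y"
    using emeasure_distr_density_indicator[OF E(1) Y k(1)]
      emeasure_distr_density_indicator[OF E(2) Y k(2)] scaled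
    by (intro measure_eqI) (simp_all add: mult.commute)
  then show ?thesis
    using integral_distr_density_indicator[OF E(1) Y k(1)]
      integral_distr_density_indicator[OF E(2) Y k(2)]
    by (simp add: mult.commute)
qed

lemma (in finite_measure) cexp_eq_of_scaled_distr:
  fixes Y :: "'a \<Rightarrow> real"
  assumes Y: "Y \<in> borel_measurable M" and PQ: "ev M P \<in> sets M" "ev M Q \<in> sets M"
    and scaled: "\<And>B. B \<in> sets borel \<Longrightarrow>
      pr M (\<lambda>\<omega>. P \<omega> \<and> Y \<omega> \<in> B) * k1 = k2 * pr M (\<lambda>\<omega>. Q \<omega> \<and> Y \<omega> \<in> B)"
    and k: "k1 > 0" "k2 \<ge> 0" and P: "pr M P > 0"
  shows "cexp M Y P = cexp M Y Q"
proof -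
  have ev_Y: "ev M (\<lambda>\<omega>. R \<omega> \<and> Y \<omega> \<in> B) = ev M R \<inter> Y -` B" for R B
    by (auto simp: ev_def)
  have int: "(LINT \<omega>:ev M P|M. Y \<omega>) * k1 = k2 * (LINT \<omega>:ev M Q|M. Y \<omega>)"
    using scaled k by (intro set_integral_eq_of_scaled_distr[OF PQ Y])
      (simp_all add: pr_def ev_Y)
  have pr: "pr M P * k1 = k2 * pr M Q"
    using scaled[of UNIV] by (simp add: ev_def)
  with P k have Q: "pr M Q \<noteq> 0" by auto
  have "(LINT \<omega>:ev M P|M. Y \<omega>) * pr M Q * k1 = k2 * (LINT \<omega>:ev M Q|M. Y \<omega>) * pr M Q"
    using int by (simp add: algebra_simps)
  also have "\<dots> = (LINT \<omega>:ev M Q|M. Y \<omega>) * pr M P * k1"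
    using pr by (simp add: algebra_simps)
  finally have "(LINT \<omega>:ev M P|M. Y \<omega>) * pr M Q = (LINT \<omega>:ev M Q|M. Y \<omega>) * pr M P"
    using k by simp
  with P Q show ?thesis
    by (simp add: cexp_def frac_eq_eq)
qed

lemma share_sum_ge_one:
  fixes p q p' q' d e :: real
  assumes "0 < p" "0 < q" "0 < p'" "0 < q'" "0 < d" "0 < e" "q * q' \<le> p * p'"
  shows "1 \<le> p * d / (p * d + q * e) + p' * e / (p' * e + q' * d)"
proof -
  define W W' where "W = p * d + q * e" and "W' = p' * e + q' * d"
  have W: "0 < W" "0 < W'" using assms by (simp_all add: W_def W'_def add_pos_pos)
  have "p * d * W' + p' * e * W - W * W' = d * e * (p * p' - q * q')"
    by (simp add: W_def W'_def algebra_simps)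
  also have "\<dots> \<ge> 0" using assms by simp
  finally have "W * W' \<le> p * d * W' + p' * e * W" by simp
  moreover have "p * d / W + p' * e / W' = (p * d * W' + p' * e * W) / (W * W')"
    using W by (simp add: field_simps)
  ultimately show ?thesis
    using W by (simp add: W_def[symmetric] W'_def[symmetric] le_divide_eq)
qed

lemma linear_combination_nonpos:
  fixes L1 L2 v u :: real
  assumes "0 \<le> L1" "0 \<le> L1 + L2" "v \<le> u" "u \<le> 0"
  shows "L1 * v + L2 * u \<le> 0"
proof -
  have "L1 * v + L2 * u \<le> L1 * u + L2 * u"
    using assms(1,3) by (simp add: mult_left_mono)
  also have "\<dots> = (L1 + L2) * u"
    by (simp add: algebra_simps)
  also have "\<dots> \<le> 0"
    using assms(2,4) by (rule mult_nonneg_nonpos)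
  finally show ?thesis .
qed

lemma wmean_contrast_le_mean_contrast:
  fixes a b y1 y2 y3 y4 :: real
  assumes ab: "1/2 \<le> a" "a \<le> b" "b < 1" and y: "y1 - y2 \<le> y4 - y3" "y4 - y3 \<le> 0"
  shows "wmean a y1 (1 - b) y2 - wmean (1 - a) y3 b y4 \<le> (y1 + y2 - y3 - y4) / 2"
proof -
  define s t k where "s = a + (1 - b)" and "t = (1 - a) + b" and "k = (a + b - 1) / 2"
  have st: "0 < s" "s \<le> t" "0 < t" using ab by (simp_all add: s_def t_def)
  define X Z where "X = k * ((y1 - y2) / s)" and "Z = k * ((y4 - y3) / t)"
  have shift: "wmean a y1 (1 - b) y2 = (y1 + y2) / 2 + X"
    "wmean (1 - a) y3 b y4 = (y3 + y4) / 2 + Z"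
    using st by (simp_all add: wmean_eq_shift s_def t_def k_def X_def Z_def field_simps)
  have "(y1 - y2) / s \<le> (y4 - y3) / s"
    using st y by (simp add: divide_right_mono)
  also have "\<dots> \<le> (y4 - y3) / t"
    using st y by (simp add: divide_left_mono_neg)
  finally have "X \<le> Z"
    unfolding X_def Z_def using ab by (intro mult_left_mono) (simp_all add: k_def)
  then show ?thesis
    unfolding shift by (simp add: field_simps)
qed

lemma proxy_stratified_contrast_le_mean_contrast:
  fixes a b d y1 y2 y3 y4 :: real
  assumes ab: "1/2 \<le> a" "a \<le> b" "b < 1" and d: "0 < d" "d < 1"
    and y: "y1 - y2 \<le> y4 - y3" "y4 - y3 \<le> 0"
  shows "(wmean (a * d) y1 ((1 - b) * (1 - d)) y2 - wmean ((1 - a) * d) y3 (b * (1 - d)) y4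
        + wmean (a * (1 - d)) y1 ((1 - b) * d) y2 - wmean ((1 - a) * (1 - d)) y3 (b * d) y4) / 2
      \<le> (y1 + y2 - y3 - y4) / 2"
proof -
  define r1 r2 r3 r4 where
    "r1 = a * d / (a * d + (1 - b) * (1 - d))" and "r2 = a * (1 - d) / (a * (1 - d) + (1 - b) * d)"
    and "r3 = (1 - a) * d / ((1 - a) * d + b * (1 - d))"
    and "r4 = (1 - a) * (1 - d) / ((1 - a) * (1 - d) + b * d)"
  have pos: "0 < a" "0 < 1 - a" "0 < b" "0 < 1 - b" "0 < 1 - d" using ab d by simp_all
  have "(1 - b) * (1 - b) \<le> a * a"
    using ab by (intro mult_mono) simp_all
  then have "1 \<le> r1 + r2"
    unfolding r1_def r2_def using pos d by (intro share_sum_ge_one) simp_all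
  moreover have "(1 - b) * b \<le> a * (1 - a)"
  proof -
    have "a * (1 - a) - (1 - b) * b = (b - a) * (a + b - 1)" by (simp add: algebra_simps)
    also have "\<dots> \<ge> 0" using ab by simp
    finally show ?thesis by simp
  qed
  then have "1 \<le> r1 + r4" "1 \<le> r2 + r3"
    unfolding r1_def r2_def r3_def r4_def using pos d
    by (intro share_sum_ge_one; simp)+
  ultimately have L: "0 \<le> r1 + r2 - 1" "0 \<le> (r1 + r2 - 1) + (r3 + r4 - 1)" by simp_all
  have W: "0 < a * d + (1 - b) * (1 - d)" "0 < a * (1 - d) + (1 - b) * d"
    "0 < (1 - a) * d + b * (1 - d)" "0 < (1 - a) * (1 - d) + b * d"
    using pos d by (intro add_pos_pos mult_pos_pos; simp)+
  have shift: "wmean (a * d) y1 ((1 - b) * (1 - d)) y2 = y2 + r1 * (y1 - y2)"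
    "wmean (a * (1 - d)) y1 ((1 - b) * d) y2 = y2 + r2 * (y1 - y2)"
    "wmean ((1 - a) * d) y3 (b * (1 - d)) y4 = y4 + r3 * (y3 - y4)"
    "wmean ((1 - a) * (1 - d)) y3 (b * d) y4 = y4 + r4 * (y3 - y4)"
    unfolding r1_def r2_def r3_def r4_def using W
    by (intro wmean_eq_shift; linarith)+
  define Q where "Q = (r1 + r2 - 1) * (y1 - y2) + (r3 + r4 - 1) * (y4 - y3)"
  have "Q \<le> 0"
    unfolding Q_def using L y by (rule linear_combination_nonpos)
  have split: "(y2 + r1 * (y1 - y2) - (y4 + r3 * (y3 - y4))
      + (y2 + r2 * (y1 - y2)) - (y4 + r4 * (y3 - y4))) / 2
    = (y1 + y2 - y3 - y4 + Q) / 2"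
    by (simp add: Q_def field_simps)
  show ?thesis
    unfolding shift split using \<open>Q \<le> 0\<close> by (intro divide_right_mono) simp_all
qed

text \<open>The hypothesis \<open>factor\<close> is the factorisation p(C) p(D|C) p(A|C) p(Y|A,C) of the
  joint law, multiplied through by p(C) so that no division occurs.\<close>

locale proxy_confounder_model = prob_space M
  for M :: "'s measure" and A C D :: "'s \<Rightarrow> bool" and Y :: "'s \<Rightarrow> real" +
  assumes sets_A: "ev M A \<in> sets M" and sets_C: "ev M C \<in> sets M" and sets_D: "ev M D \<in> sets M"
    and Y_borel: "Y \<in> borel_measurable M" and Y_integrable: "integrable M Y"
    and factor: "\<And>x y z B. B \<in> sets borel \<Longrightarrow>
      pr M (\<lambda>\<omega>. A \<omega> = x \<and> C \<omega> = y \<and> D \<omega> = z \<and> Y \<omega> \<in> B) * pr M (\<lambda>\<omega>. C \<omega> = y)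
      = pr M (\<lambda>\<omega>. D \<omega> = z \<and> C \<omega> = y) * pr M (\<lambda>\<omega>. A \<omega> = x \<and> C \<omega> = y \<and> Y \<omega> \<in> B)"
    and atom_pos: "\<And>x y z. pr M (\<lambda>\<omega>. A \<omega> = x \<and> C \<omega> = y \<and> D \<omega> = z) > 0"
begin

lemma sets_ev_eq:
  "ev M (\<lambda>\<omega>. A \<omega> = x) \<in> sets M" "ev M (\<lambda>\<omega>. C \<omega> = y) \<in> sets M" "ev M (\<lambda>\<omega>. D \<omega> = z) \<in> sets M"
  using sets_A sets_C sets_D by (simp_all add: ev_sets_eq_bool)

lemma pr_pos_of_atom:
  assumes "ev M P \<in> sets M" "\<And>\<omega>. A \<omega> = x \<and> C \<omega> = y \<and> D \<omega> = z \<Longrightarrow> P \<omega>"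
  shows "pr M P > 0"
proof -
  have "pr M (\<lambda>\<omega>. A \<omega> = x \<and> C \<omega> = y \<and> D \<omega> = z) \<le> pr M P"
    by (rule pr_mono) (use assms in auto)
  with atom_pos[of x y z] show ?thesis by linarith
qed

lemma cpr_A_bounds:
  "0 < cpr M (\<lambda>\<omega>. A \<omega> = x) (\<lambda>\<omega>. C \<omega> = y)" "cpr M (\<lambda>\<omega>. A \<omega> = x) (\<lambda>\<omega>. C \<omega> = y) < 1"
proof -
  have "0 < pr M (\<lambda>\<omega>. A \<omega> = x \<and> C \<omega> = y)"
    by (rule pr_pos_of_atom[of _ x y True]) (auto intro: ev_sets_conj sets_ev_eq)
  moreover have "0 < pr M (\<lambda>\<omega>. \<not> A \<omega> = x \<and> C \<omega> = y)"
    by (rule pr_pos_of_atom[of _ "\<not> x" y True]) (auto intro!: ev_sets_conj ev_sets_not sets_ev_eq)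
  ultimately show "0 < cpr M (\<lambda>\<omega>. A \<omega> = x) (\<lambda>\<omega>. C \<omega> = y)" "cpr M (\<lambda>\<omega>. A \<omega> = x) (\<lambda>\<omega>. C \<omega> = y) < 1"
    using sets_ev_eq by (simp_all add: cpr_strict_bounds)
qed

lemma cpr_D_bounds:
  "0 < cpr M (\<lambda>\<omega>. D \<omega> = z) (\<lambda>\<omega>. C \<omega> = y)" "cpr M (\<lambda>\<omega>. D \<omega> = z) (\<lambda>\<omega>. C \<omega> = y) < 1"
proof -
  have "0 < pr M (\<lambda>\<omega>. D \<omega> = z \<and> C \<omega> = y)"
    by (rule pr_pos_of_atom[of _ True y z]) (auto intro: ev_sets_conj sets_ev_eq)
  moreover have "0 < pr M (\<lambda>\<omega>. \<not> D \<omega> = z \<and> C \<omega> = y)"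
    by (rule pr_pos_of_atom[of _ True y "\<not> z"]) (auto intro!: ev_sets_conj ev_sets_not sets_ev_eq)
  ultimately show "0 < cpr M (\<lambda>\<omega>. D \<omega> = z) (\<lambda>\<omega>. C \<omega> = y)" "cpr M (\<lambda>\<omega>. D \<omega> = z) (\<lambda>\<omega>. C \<omega> = y) < 1"
    using sets_ev_eq by (simp_all add: cpr_strict_bounds)
qed

lemma pr_atom_eq:
  "pr M (\<lambda>\<omega>. A \<omega> = x \<and> C \<omega> = y \<and> D \<omega> = z)
    = pr M (\<lambda>\<omega>. C \<omega> = y) * cpr M (\<lambda>\<omega>. A \<omega> = x) (\<lambda>\<omega>. C \<omega> = y) * cpr M (\<lambda>\<omega>. D \<omega> = z) (\<lambda>\<omega>. C \<omega> = y)"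
proof -
  have "pr M (\<lambda>\<omega>. C \<omega> = y) > 0"
    by (rule pr_pos_of_atom[of _ x y z]) (auto simp: sets_ev_eq)
  then show ?thesis
    using factor[of UNIV x y z] by (simp add: cpr_def field_simps)
qed

lemma cexp_atom_eq:
  "cexp M Y (\<lambda>\<omega>. A \<omega> = x \<and> C \<omega> = y \<and> D \<omega> = z) = cexp M Y (\<lambda>\<omega>. A \<omega> = x \<and> C \<omega> = y)"
proof (rule cexp_eq_of_scaled_distr[OF Y_borel])
  show "ev M (\<lambda>\<omega>. A \<omega> = x \<and> C \<omega> = y \<and> D \<omega> = z) \<in> sets M" "ev M (\<lambda>\<omega>. A \<omega> = x \<and> C \<omega> = y) \<in> sets M"
    using sets_ev_eq by (intro ev_sets_conj; simp)+
  show "pr M (\<lambda>\<omega>. C \<omega> = y) > 0"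
    by (rule pr_pos_of_atom[of _ x y z]) (auto simp: sets_ev_eq)
  show "pr M (\<lambda>\<omega>. D \<omega> = z \<and> C \<omega> = y) \<ge> 0"
    by (simp add: pr_def)
  show "pr M (\<lambda>\<omega>. A \<omega> = x \<and> C \<omega> = y \<and> D \<omega> = z) > 0"
    by (rule atom_pos)
  show "pr M (\<lambda>\<omega>. (A \<omega> = x \<and> C \<omega> = y \<and> D \<omega> = z) \<and> Y \<omega> \<in> B) * pr M (\<lambda>\<omega>. C \<omega> = y)
      = pr M (\<lambda>\<omega>. D \<omega> = z \<and> C \<omega> = y) * pr M (\<lambda>\<omega>. (A \<omega> = x \<and> C \<omega> = y) \<and> Y \<omega> \<in> B)"
    if "B \<in> sets borel" for B
    using factor[OF that] by (simp add: conj_assoc)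
qed

lemma cexp_A_eq:
  "cexp M Y (\<lambda>\<omega>. A \<omega> = x)
    = wmean (pr M (\<lambda>\<omega>. A \<omega> = x \<and> C \<omega>)) (cexp M Y (\<lambda>\<omega>. A \<omega> = x \<and> C \<omega>))
        (pr M (\<lambda>\<omega>. A \<omega> = x \<and> \<not> C \<omega>)) (cexp M Y (\<lambda>\<omega>. A \<omega> = x \<and> \<not> C \<omega>))"
proof -
  have sets: "ev M (\<lambda>\<omega>. A \<omega> = x \<and> C \<omega> = y) \<in> sets M" for y
    using sets_ev_eq by (intro ev_sets_conj)
  have pos: "pr M (\<lambda>\<omega>. A \<omega> = x \<and> C \<omega> = y) > 0" for y
    by (rule pr_pos_of_atom[of _ x y True]) (simp_all add: sets)
  show ?thesis
  proof (rule cexp_disjoint_Un[OF Y_integrable])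
    show "ev M (\<lambda>\<omega>. A \<omega> = x) = ev M (\<lambda>\<omega>. A \<omega> = x \<and> C \<omega>) \<union> ev M (\<lambda>\<omega>. A \<omega> = x \<and> \<not> C \<omega>)"
      "ev M (\<lambda>\<omega>. A \<omega> = x \<and> C \<omega>) \<inter> ev M (\<lambda>\<omega>. A \<omega> = x \<and> \<not> C \<omega>) = {}"
      by (auto simp: ev_def)
  qed (use sets[of True] sets[of False] pos[of True] pos[of False] in simp_all)
qed

lemma cexp_AD_eq:
  "cexp M Y (\<lambda>\<omega>. A \<omega> = x \<and> D \<omega> = z)
    = wmean (pr M (\<lambda>\<omega>. A \<omega> = x \<and> C \<omega> \<and> D \<omega> = z)) (cexp M Y (\<lambda>\<omega>. A \<omega> = x \<and> C \<omega>))
        (pr M (\<lambda>\<omega>. A \<omega> = x \<and> \<not> C \<omega> \<and> D \<omega> = z)) (cexp M Y (\<lambda>\<omega>. A \<omega> = x \<and> \<not> C \<omega>))"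
proof -
  have sets: "ev M (\<lambda>\<omega>. A \<omega> = x \<and> C \<omega> = y \<and> D \<omega> = z) \<in> sets M" for y
    using sets_ev_eq by (intro ev_sets_conj)
  have "cexp M Y (\<lambda>\<omega>. A \<omega> = x \<and> D \<omega> = z)
    = wmean (pr M (\<lambda>\<omega>. A \<omega> = x \<and> C \<omega> \<and> D \<omega> = z)) (cexp M Y (\<lambda>\<omega>. A \<omega> = x \<and> C \<omega> \<and> D \<omega> = z))
        (pr M (\<lambda>\<omega>. A \<omega> = x \<and> \<not> C \<omega> \<and> D \<omega> = z)) (cexp M Y (\<lambda>\<omega>. A \<omega> = x \<and> \<not> C \<omega> \<and> D \<omega> = z))"
  proof (rule cexp_disjoint_Un[OF Y_integrable])
    show "ev M (\<lambda>\<omega>. A \<omega> = x \<and> D \<omega> = z)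
        = ev M (\<lambda>\<omega>. A \<omega> = x \<and> C \<omega> \<and> D \<omega> = z) \<union> ev M (\<lambda>\<omega>. A \<omega> = x \<and> \<not> C \<omega> \<and> D \<omega> = z)"
      "ev M (\<lambda>\<omega>. A \<omega> = x \<and> C \<omega> \<and> D \<omega> = z) \<inter> ev M (\<lambda>\<omega>. A \<omega> = x \<and> \<not> C \<omega> \<and> D \<omega> = z) = {}"
      by (auto simp: ev_def)
  qed (use sets[of True] sets[of False] atom_pos[of x True z] atom_pos[of x False z] in simp_all)
  then show ?thesis
    using cexp_atom_eq[of x True z] cexp_atom_eq[of x False z] by simp
qed

end

locale symmetric_design = proxy_confounder_model +
  fixes a b d :: real
  assumes pr_C: "pr M C = 1/2"
    and cpr_A_C: "cpr M A C = a" and cpr_not_A_not_C: "cpr M (\<lambda>\<omega>. \<not> A \<omega>) (\<lambda>\<omega>. \<not> C \<omega>) = b"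
    and cpr_D_C: "cpr M D C = d" and cpr_not_D_not_C: "cpr M (\<lambda>\<omega>. \<not> D \<omega>) (\<lambda>\<omega>. \<not> C \<omega>) = d"
begin

lemma pr_not_C: "pr M (\<lambda>\<omega>. \<not> C \<omega>) = 1/2"
  using pr_not[OF sets_C] pr_C by simp

lemma cpr_eq:
  "cpr M (\<lambda>\<omega>. A \<omega> = x) C = (if x then a else 1 - a)"
  "cpr M (\<lambda>\<omega>. A \<omega> = x) (\<lambda>\<omega>. \<not> C \<omega>) = (if x then 1 - b else b)"
  "cpr M (\<lambda>\<omega>. D \<omega> = z) C = (if z then d else 1 - d)"
  "cpr M (\<lambda>\<omega>. D \<omega> = z) (\<lambda>\<omega>. \<not> C \<omega>) = (if z then 1 - d else d)"
  using cpr_not[OF sets_A sets_C] cpr_not[OF ev_sets_not[OF sets_A] ev_sets_not[OF sets_C]]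
    cpr_not[OF sets_D sets_C] cpr_not[OF ev_sets_not[OF sets_D] ev_sets_not[OF sets_C]] pr_C pr_not_C
  by (cases x; cases z; simp add: cpr_A_C cpr_not_A_not_C cpr_D_C cpr_not_D_not_C)+

lemma pr_A_C_eq:
  "pr M (\<lambda>\<omega>. A \<omega> = x \<and> C \<omega>) = (if x then a else 1 - a) / 2"
  "pr M (\<lambda>\<omega>. A \<omega> = x \<and> \<not> C \<omega>) = (if x then 1 - b else b) / 2"
  using pr_conj_eq_cpr[of M C "\<lambda>\<omega>. A \<omega> = x"] pr_conj_eq_cpr[of M "\<lambda>\<omega>. \<not> C \<omega>" "\<lambda>\<omega>. A \<omega> = x"]
  by (simp_all add: pr_C pr_not_C cpr_eq)

lemma pr_A_C_D_eq:
  "pr M (\<lambda>\<omega>. A \<omega> = x \<and> C \<omega> \<and> D \<omega> = z) = (if x then a else 1 - a) * (if z then d else 1 - d) / 2"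
  "pr M (\<lambda>\<omega>. A \<omega> = x \<and> \<not> C \<omega> \<and> D \<omega> = z) = (if x then 1 - b else b) * (if z then 1 - d else d) / 2"
  using pr_atom_eq[of x True z] pr_atom_eq[of x False z] by (simp_all add: pr_C pr_not_C cpr_eq)

lemma pr_D_eq: "pr M D = 1/2" "pr M (\<lambda>\<omega>. \<not> D \<omega>) = 1/2"
proof -
  have "pr M D = d / 2 + (1 - d) / 2"
    using pr_split[OF sets_D sets_C] pr_conj_eq_cpr[of M C D] pr_conj_eq_cpr[of M "\<lambda>\<omega>. \<not> C \<omega>" D]
      cpr_eq(3,4)[of True]
    by (simp add: pr_C pr_not_C)
  then show "pr M D = 1/2" "pr M (\<lambda>\<omega>. \<not> D \<omega>) = 1/2"
    using pr_not[OF sets_D] by (simp_all add: add_divide_distrib[symmetric])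
qed

lemma cexp_A_design_eq:
  "cexp M Y (\<lambda>\<omega>. A \<omega> = x)
    = wmean (if x then a else 1 - a) (cexp M Y (\<lambda>\<omega>. A \<omega> = x \<and> C \<omega>))
        (if x then 1 - b else b) (cexp M Y (\<lambda>\<omega>. A \<omega> = x \<and> \<not> C \<omega>))"
  unfolding cexp_A_eq pr_A_C_eq by (rule wmean_divide) simp

lemma cexp_AD_design_eq:
  "cexp M Y (\<lambda>\<omega>. A \<omega> = x \<and> D \<omega> = z)
    = wmean ((if x then a else 1 - a) * (if z then d else 1 - d)) (cexp M Y (\<lambda>\<omega>. A \<omega> = x \<and> C \<omega>))
        ((if x then 1 - b else b) * (if z then 1 - d else d)) (cexp M Y (\<lambda>\<omega>. A \<omega> = x \<and> \<not> C \<omega>))"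
  unfolding cexp_AD_eq pr_A_C_D_eq by (rule wmean_divide) simp

lemma risk_differences_eq:
  defines "y1 \<equiv> cexp M Y (\<lambda>\<omega>. A \<omega> \<and> C \<omega>)" and "y2 \<equiv> cexp M Y (\<lambda>\<omega>. A \<omega> \<and> \<not> C \<omega>)"
    and "y3 \<equiv> cexp M Y (\<lambda>\<omega>. \<not> A \<omega> \<and> C \<omega>)" and "y4 \<equiv> cexp M Y (\<lambda>\<omega>. \<not> A \<omega> \<and> \<not> C \<omega>)"
  shows "RD_true M A C Y = (y1 + y2 - y3 - y4) / 2"
    and "RD_crude M A Y = wmean a y1 (1 - b) y2 - wmean (1 - a) y3 b y4"
    and "RD_obs M A D Y =
      (wmean (a * d) y1 ((1 - b) * (1 - d)) y2 - wmean ((1 - a) * d) y3 (b * (1 - d)) y4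
     + wmean (a * (1 - d)) y1 ((1 - b) * d) y2 - wmean ((1 - a) * (1 - d)) y3 (b * d) y4) / 2"
proof -
  show "RD_true M A C Y = (y1 + y2 - y3 - y4) / 2"
    unfolding RD_true_def y1_def y2_def y3_def y4_def pr_C pr_not_C by (simp add: field_simps)
  show "RD_crude M A Y = wmean a y1 (1 - b) y2 - wmean (1 - a) y3 b y4"
    using cexp_A_design_eq[of True] cexp_A_design_eq[of False]
    by (simp add: RD_crude_def y1_def y2_def y3_def y4_def)
  have "RD_obs M A D Y
      = (cexp M Y (\<lambda>\<omega>. A \<omega> \<and> D \<omega>) - cexp M Y (\<lambda>\<omega>. \<not> A \<omega> \<and> D \<omega>)
       + cexp M Y (\<lambda>\<omega>. A \<omega> \<and> \<not> D \<omega>) - cexp M Y (\<lambda>\<omega>. \<not> A \<omega> \<and> \<not> D \<omega>)) / 2"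
    unfolding RD_obs_def RD_true_def pr_D_eq by (simp add: field_simps)
  then show "RD_obs M A D Y =
      (wmean (a * d) y1 ((1 - b) * (1 - d)) y2 - wmean ((1 - a) * d) y3 (b * (1 - d)) y4
     + wmean (a * (1 - d)) y1 ((1 - b) * d) y2 - wmean ((1 - a) * (1 - d)) y3 (b * d) y4) / 2"
    using cexp_AD_design_eq[of True True] cexp_AD_design_eq[of True False]
      cexp_AD_design_eq[of False True] cexp_AD_design_eq[of False False]
    by (simp add: y1_def y2_def y3_def y4_def)
qed

lemma design_bounds: "b < 1" "0 < d" "d < 1"
  using cpr_A_bounds(2)[of False False] cpr_D_bounds[of True True]
  by (simp_all add: cpr_not_A_not_C cpr_D_C)

end

theorem theorem5:
  fixes M :: "'s measure"
    and A C D :: "'s \<Rightarrow> bool"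
    and Y :: "'s \<Rightarrow> real"
  assumes "prob_space M"
    and "ev M A \<in> sets M" and "ev M C \<in> sets M" and "ev M D \<in> sets M"
    and "Y \<in> borel_measurable M" and "integrable M Y"
    and factor: "\<forall>x y z. \<forall>B \<in> sets borel.
        pr M (\<lambda>\<omega>. A \<omega> = x \<and> C \<omega> = y \<and> D \<omega> = z \<and> Y \<omega> \<in> B) * pr M (\<lambda>\<omega>. C \<omega> = y)
      = pr M (\<lambda>\<omega>. D \<omega> = z \<and> C \<omega> = y) * pr M (\<lambda>\<omega>. A \<omega> = x \<and> C \<omega> = y \<and> Y \<omega> \<in> B)"
    and pos: "\<forall>x y z. pr M (\<lambda>\<omega>. A \<omega> = x \<and> C \<omega> = y \<and> D \<omega> = z) > 0"
    and "pr M C = 0.5"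
    and "cpr M D C = cpr M (\<lambda>\<omega>. \<not> D \<omega>) (\<lambda>\<omega>. \<not> C \<omega>)"
    and "cpr M D C \<ge> 0.5"
    and "cpr M (\<lambda>\<omega>. \<not> A \<omega>) (\<lambda>\<omega>. \<not> C \<omega>) \<ge> cpr M A C"
    and "cpr M A C \<ge> 0.5"
    and "cexp M Y (\<lambda>\<omega>. A \<omega> \<and> C \<omega>) - cexp M Y (\<lambda>\<omega>. A \<omega> \<and> \<not> C \<omega>)
         \<le> cexp M Y (\<lambda>\<omega>. \<not> A \<omega> \<and> \<not> C \<omega>) - cexp M Y (\<lambda>\<omega>. \<not> A \<omega> \<and> C \<omega>)"
    and "cexp M Y (\<lambda>\<omega>. \<not> A \<omega> \<and> \<not> C \<omega>) - cexp M Y (\<lambda>\<omega>. \<not> A \<omega> \<and> C \<omega>) \<le> 0"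
  shows "RD_crude M A Y \<le> RD_true M A C Y \<and> RD_obs M A D Y \<le> RD_true M A C Y"
proof -
  have "proxy_confounder_model M A C D Y"
    using assms(1-6) factor pos
    by (intro proxy_confounder_model.intro proxy_confounder_model_axioms.intro) auto
  then interpret symmetric_design M A C D Y "cpr M A C" "cpr M (\<lambda>\<omega>. \<not> A \<omega>) (\<lambda>\<omega>. \<not> C \<omega>)" "cpr M D C"
    using assms(9,10) by (intro symmetric_design.intro symmetric_design_axioms.intro) simp_all
  have "1/2 \<le> cpr M A C"
    using assms(13) by simp
  then show ?thesis
    using wmean_contrast_le_mean_contrast[OF _ assms(12) design_bounds(1) assms(14,15)]
      proxy_stratified_contrast_le_mean_contrast[OF _ assms(12) design_bounds assms(14,15)]
    by (simp add: risk_differences_eq)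
qed

end
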